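(* Let $F:\mathbb{R}^d\to\mathbb{R}$ be $L$-smooth and $\mu$-strongly convex, $\mathbf{K}\in\mathbb{R}^{p\times d}$ nonzero, $b\in\mathrm{range}(\mathbf{K})$, and let $(x^\star,y^\star)$ be the optimal primal–dual pair described in the context. Let $(x^k,x_g^k,y^k)$ be generated by Algorithm B (described in the context) with parameters $\eta,\theta>0$, $\tau$, and $\alpha$ satisfying $0\leq \alpha \leq \mu$. Then for every $k\ge 0$, $$-\frac{1}{2\eta}\|x^{k+1} - x^k\|^2 \leq -\frac{\eta}{4}\|\mathbf{K}^T y^{k+1} - \mathbf{K}^T y^{\star}\|^2 + \eta\alpha^2\|x^{k+1} - x^{\star}\|^2 + 2\eta L\,\mathrm{D}_{F}(x_g^k, x^{\star}).$$
   Context: $F$ is $L$-smooth ($\nabla F$ is $L$-Lipschitz) and $\mu$-strongly convex ($F-\frac{\mu}{2}\|\cdot\|^2$ convex), $0<\mu\le L$. $\mathrm{D}_F(x,x') \coloneqq F(x) - F(x') -\langle\nabla F(x'),x-x'\rangle$. $x^\star$ is the unique minimizer of $F$ on $\{x:\mathbf{K}x=b\}$, and $y^\star$ is the unique vector in $\mathrm{range}(\mathbf{K})$ with $\nabla F(x^\star)+\mathbf{K}^Ty^\star=0$. Algorithm B (parameters $x^0\in\mathbb{R}^d$, $y^0=0\in\mathbb{R}^p$, $\eta,\theta,\alpha$, $\tau$): set $x_f^0=x^0$. For $k=0,1,\ldots$: $x_g^k = \tau x^k + (1-\tau)x_f^k$; $x^{k+\frac12} = (1+\eta\alpha)^{-1}\big(x^k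 - \eta(\nabla F(x_g^k) - \alpha x_g^k + \mathbf{K}^T y^k)\big)$; $y^{k+1} = y^k + \theta(\mathbf{K}x^{k+\frac12} - b)$; $x^{k+1} = (1+\eta\alpha)^{-1}\big(x^k - \eta(\nabla F(x_g^k) - \alpha x_g^k + \mathbf{K}^T y^{k+1})\big)$; $x_f^{k+1} = x_g^k + \frac{2\tau}{2-\tau}(x^{k+1}-x^k)$. *)

theory Defs
  imports "HOL-Analysis.Analysis"
begin

definition bregman :: "(real^'d::finite \<Rightarrow> real) \<Rightarrow> (real^'d \<Rightarrow> real^'d) \<Rightarrow> real^'d \<Rightarrow> real^'d \<Rightarrow> real"
  where "bregman F gF x x' = F x - F x' - gF x' \<bullet> (x - x')"

definition algB_step ::
  "(real^'d \<Rightarrow> real^'d) \<Rightarrow> real^'d^'p \<Rightarrow> real^'p \<Rightarrow> real \<Rightarrow> real \<Rightarrow> real \<Rightarrow> real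
   \<Rightarrow> ((real^'d) \<times> (real^'d) \<times> (real^'p)) \<Rightarrow> ((real^'d) \<times> (real^'d) \<times> (real^'p))"
  where "algB_step gF K b \<eta> \<theta> \<alpha> \<tau> s =
    (let x = fst s; xf = fst (snd s); y = snd (snd s);
         xg = \<tau> *\<^sub>R x + (1 - \<tau>) *\<^sub>R xf;
         xh = inverse (1 + \<eta> * \<alpha>) *\<^sub>R (x - \<eta> *\<^sub>R (gF xg - \<alpha> *\<^sub>R xg + transpose K *v y));
         y' = y + \<theta> *\<^sub>R (K *v xh - b);
         x' = inverse (1 + \<eta> * \<alpha>) *\<^sub>R (x - \<eta> *\<^sub>R (gF xg - \<alpha> *\<^sub>R xg + transpose K *v y'));
         xf' = xg + (2 * \<tau> / (2 - \<tau>)) *\<^sub>R (x' - x)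
     in (x', xf', y'))"

definition algB_state ::
  "(real^'d \<Rightarrow> real^'d) \<Rightarrow> real^'d^'p \<Rightarrow> real^'p \<Rightarrow> real \<Rightarrow> real \<Rightarrow> real \<Rightarrow> real
   \<Rightarrow> real^'d \<Rightarrow> nat \<Rightarrow> ((real^'d) \<times> (real^'d) \<times> (real^'p))"
  where "algB_state gF K b \<eta> \<theta> \<alpha> \<tau> x0 k = (algB_step gF K b \<eta> \<theta> \<alpha> \<tau> ^^ k) (x0, x0, 0)"

definition algB_x where "algB_x gF K b \<eta> \<theta> \<alpha> \<tau> x0 k = fst (algB_state gF K b \<eta> \<theta> \<alpha> \<tau> x0 k)"
definition algB_xf where "algB_xf gF K b \<eta> \<theta> \<alpha> \<tau> x0 k = fst (snd (algB_state gF K b \<eta> \<theta> \<alpha> \<tau> x0 k))"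
definition algB_y where "algB_y gF K b \<eta> \<theta> \<alpha> \<tau> x0 k = snd (snd (algB_state gF K b \<eta> \<theta> \<alpha> \<tau> x0 k))"
definition algB_xg where "algB_xg gF K b \<eta> \<theta> \<alpha> \<tau> x0 k =
  \<tau> *\<^sub>R algB_x gF K b \<eta> \<theta> \<alpha> \<tau> x0 k + (1 - \<tau>) *\<^sub>R algB_xf gF K b \<eta> \<theta> \<alpha> \<tau> x0 k"

end

theory Submission
  imports Defs
begin

text \<open>Write \<open>a = x\<^sup>k\<^sup>+\<^sup>1 - x\<^sup>k\<close>, \<open>r = K\<^sup>T(y\<^sup>k\<^sup>+\<^sup>1 - y\<^sup>\<star>)\<close>, \<open>e = x\<^sup>k\<^sup>+\<^sup>1 - x\<^sup>\<star>\<close> and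
  \<open>w = \<nabla>F(x\<^sub>g\<^sup>k) - \<nabla>F(x\<^sup>\<star>) - \<alpha>(x\<^sub>g\<^sup>k - x\<^sup>\<star>)\<close>. Because \<open>\<nabla>F(x\<^sup>\<star>) = -K\<^sup>Ty\<^sup>\<star>\<close>, the
  update of \<open>x\<close> reads \<open>a = -\<eta>(w + r + \<alpha> e)\<close>, so \<open>\<parallel>r\<parallel>\<^sup>2 \<le> 2\<parallel>a\<parallel>\<^sup>2/\<eta>\<^sup>2 + 4\<parallel>w\<parallel>\<^sup>2 + 4\<alpha>\<^sup>2\<parallel>e\<parallel>\<^sup>2\<close>.
  Strong monotonicity of \<open>\<nabla>F\<close> and \<open>\<alpha> \<le> \<mu>\<close> give \<open>\<parallel>w\<parallel> \<le> \<parallel>\<nabla>F(x\<^sub>g\<^sup>k) - \<nabla>F(x\<^sup>\<star>)\<parallel>\<close>, and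
  cocoercivity of an \<open>L\<close>-smooth convex gradient bounds the latter square by
  \<open>2L D\<^sub>F(x\<^sub>g\<^sup>k, x\<^sup>\<star>)\<close>.\<close>

lemma has_real_derivative_along_line:
  fixes F :: "'a::real_inner \<Rightarrow> real"
  assumes grad: "\<And>x. (F has_derivative (\<lambda>h. gF x \<bullet> h)) (at x)"
  shows "((\<lambda>t. F (x + t *\<^sub>R d)) has_real_derivative (gF (x + t *\<^sub>R d) \<bullet> d)) (at t within S)"
proof -
  have line: "((\<lambda>t. x + t *\<^sub>R d) has_derivative (\<lambda>h. h *\<^sub>R d)) (at t within S)"
    by (auto intro!: derivative_eq_intros)
  have "((\<lambda>t. F (x + t *\<^sub>R d)) has_derivative (\<lambda>h. gF (x + t *\<^sub>R d) \<bullet> (h *\<^sub>R d))) (at t within S)"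
    using has_derivative_in_compose[OF line has_derivative_at_withinI[OF grad]] by (simp add: o_def)
  then show ?thesis unfolding has_field_derivative_def
    by (rule has_derivative_eq_rhs) (auto simp: fun_eq_iff mult.commute)
qed

lemma convex_on_gradient_inequality:
  fixes G :: "'a::real_inner \<Rightarrow> real"
  assumes cvx: "convex_on UNIV G" and grad: "\<And>x. (G has_derivative (\<lambda>h. gG x \<bullet> h)) (at x)"
  shows "G x + gG x \<bullet> (y - x) \<le> G y"
proof -
  define d where "d = y - x"
  have "convex_on UNIV (\<lambda>t::real. G (x + t *\<^sub>R d))"
  proof (rule convex_onI)
    fix a u v :: real assume a: "0 < a" "a < 1"
    have "x + ((1 - a) *\<^sub>R u + a *\<^sub>R v) *\<^sub>R d = (1 - a) *\<^sub>R (x + u *\<^sub>R d) + a *\<^sub>R (x + v *\<^sub>R d)"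
      by (simp add: algebra_simps)
    then show "G (x + ((1 - a) *\<^sub>R u + a *\<^sub>R v) *\<^sub>R d) \<le> (1 - a) * G (x + u *\<^sub>R d) + a * G (x + v *\<^sub>R d)"
      using convex_onD[OF cvx, of a "x + u *\<^sub>R d" "x + v *\<^sub>R d"] a by simp
  qed auto
  moreover have "((\<lambda>t. G (x + t *\<^sub>R d)) has_real_derivative gG x \<bullet> d) (at 0)"
    using has_real_derivative_along_line[OF grad, of x d 0] by simp
  ultimately have "G (x + 1 *\<^sub>R d) - G (x + 0 *\<^sub>R d) \<ge> (gG x \<bullet> d) * (1 - 0)"
    by (intro convex_on_imp_above_tangent) auto
  then show ?thesis by (simp add: d_def)
qed

lemma lipschitz_gradient_upper_bound:
  fixes F :: "'a::real_inner \<Rightarrow> real"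
  assumes grad: "\<And>x. (F has_derivative (\<lambda>h. gF x \<bullet> h)) (at x)"
    and lipschitz: "\<And>x x'. norm (gF x - gF x') \<le> L * norm (x - x')"
  shows "F y \<le> F x + gF x \<bullet> (y - x) + L / 2 * (norm (y - x))\<^sup>2"
proof -
  define d where "d = y - x"
  define h where "h t = F (x + t *\<^sub>R d) - t * (gF x \<bullet> d) - L / 2 * t\<^sup>2 * (norm d)\<^sup>2" for t
  have "h 1 \<le> h 0"
  proof (rule DERIV_nonpos_imp_nonincreasing[of 0 1 h])
    fix t :: real assume t: "0 \<le> t" "t \<le> 1"
    have h': "(h has_real_derivative (gF (x + t *\<^sub>R d) \<bullet> d - gF x \<bullet> d - L * t * (norm d)\<^sup>2)) (at t)"
      unfolding h_def
      by (rule has_real_derivative_along_line[OF grad] derivative_eq_intros refl | simp)+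
    have "gF (x + t *\<^sub>R d) \<bullet> d - gF x \<bullet> d = (gF (x + t *\<^sub>R d) - gF x) \<bullet> d"
      by (simp add: inner_diff_left)
    also have "\<dots> \<le> norm (gF (x + t *\<^sub>R d) - gF x) * norm d" by (rule norm_cauchy_schwarz)
    also have "\<dots> \<le> L * norm (t *\<^sub>R d) * norm d"
      using lipschitz[of "x + t *\<^sub>R d" x] by (simp add: mult_right_mono)
    also have "\<dots> = L * t * (norm d)\<^sup>2" using t by (simp add: power2_eq_square)
    finally show "\<exists>y. (h has_real_derivative y) (at t) \<and> y \<le> 0" using h' by force
  qed simp
  then show ?thesis by (simp add: h_def d_def)
qed

lemma strongly_convex_gradient_lower_bound:
  fixes F :: "'a::real_inner \<Rightarrow> real"
  assumes grad: "\<And>x. (F has_derivative (\<lambda>h. gF x \<bullet> h)) (at x)"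
    and strconv: "convex_on UNIV (\<lambda>x. F x - \<mu> / 2 * (norm x)\<^sup>2)"
  shows "F x + gF x \<bullet> (y - x) + \<mu> / 2 * (norm (y - x))\<^sup>2 \<le> F y"
proof -
  have "((\<lambda>x. F x - \<mu> / 2 * (norm x)\<^sup>2) has_derivative (\<lambda>h. (gF z - \<mu> *\<^sub>R z) \<bullet> h)) (at z)" for z
    unfolding power2_norm_eq_inner
    by (rule derivative_eq_intros grad refl | simp)+
      (auto simp: fun_eq_iff inner_diff_left inner_commute algebra_simps)
  from convex_on_gradient_inequality[OF strconv this]
  have "F x - \<mu> / 2 * (norm x)\<^sup>2 + (gF x - \<mu> *\<^sub>R x) \<bullet> (y - x) \<le> F y - \<mu> / 2 * (norm y)\<^sup>2" .
  then show ?thesis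
    by (simp add: power2_norm_eq_inner inner_diff_left inner_diff_right inner_commute algebra_simps)
qed

lemma strongly_convex_gradient_monotone:
  fixes F :: "'a::real_inner \<Rightarrow> real"
  assumes grad: "\<And>x. (F has_derivative (\<lambda>h. gF x \<bullet> h)) (at x)"
    and strconv: "convex_on UNIV (\<lambda>x. F x - \<mu> / 2 * (norm x)\<^sup>2)"
  shows "\<mu> * (norm (x - y))\<^sup>2 \<le> (gF x - gF y) \<bullet> (x - y)"
  using strongly_convex_gradient_lower_bound[OF grad strconv, of x y]
    strongly_convex_gradient_lower_bound[OF grad strconv, of y x]
  by (simp add: inner_diff_left inner_diff_right norm_minus_commute algebra_simps)

text \<open>Cocoercivity: compare \<open>F y\<close> with \<open>F\<close> at the gradient step \<open>x - (\<nabla>F x - \<nabla>F y)/L\<close>,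
  bounded above by the descent lemma at \<open>x\<close> and below by the tangent at \<open>y\<close>.\<close>
lemma lipschitz_gradient_norm_le_bregman:
  fixes F :: "real^'d \<Rightarrow> real"
  assumes grad: "\<And>x. (F has_derivative (\<lambda>h. gF x \<bullet> h)) (at x)"
    and lipschitz: "\<And>x x'. norm (gF x - gF x') \<le> L * norm (x - x')"
    and tangent: "\<And>x y. F x + gF x \<bullet> (y - x) \<le> F y"
    and L_pos: "0 < L"
  shows "(norm (gF x - gF y))\<^sup>2 \<le> 2 * L * bregman F gF x y"
proof -
  define w where "w = gF x - gF y"
  define z where "z = x - (1 / L) *\<^sub>R w"
  have "F y + gF y \<bullet> (z - y) \<le> F z" by (rule tangent)
  also have "F z \<le> F x + gF x \<bullet> (z - x) + L / 2 * (norm (z - x))\<^sup>2"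
    by (rule lipschitz_gradient_upper_bound[OF grad lipschitz])
  finally have "F y + gF y \<bullet> (x - y) - gF y \<bullet> w / L \<le> F x - gF x \<bullet> w / L + (norm w)\<^sup>2 / (2 * L)"
    using L_pos by (simp add: z_def inner_diff_right power_divide power2_eq_square)
  then have "(gF x - gF y) \<bullet> w / L - (norm w)\<^sup>2 / (2 * L) \<le> bregman F gF x y"
    by (simp add: bregman_def inner_diff_left diff_divide_distrib)
  then show ?thesis
    using L_pos by (simp add: w_def power2_norm_eq_inner field_simps)
qed

lemma norm_add_square_le:
  fixes u v :: "'a::real_inner"
  shows "(norm (u + v))\<^sup>2 \<le> 2 * (norm u)\<^sup>2 + 2 * (norm v)\<^sup>2"
proof -
  have "0 \<le> (norm (u - v))\<^sup>2" by simp
  then show ?thesis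
    by (simp add: power2_norm_eq_inner inner_add_left inner_add_right inner_diff_left
        inner_diff_right inner_commute)
qed

lemma norm_diff_scaleR_le_of_inner_ge:
  fixes g d :: "'a::real_inner"
  assumes "0 \<le> \<alpha>" "\<alpha> \<le> \<mu>" and "\<mu> * (norm d)\<^sup>2 \<le> g \<bullet> d"
  shows "(norm (g - \<alpha> *\<^sub>R d))\<^sup>2 \<le> (norm g)\<^sup>2"
proof -
  have "\<alpha>\<^sup>2 * (norm d)\<^sup>2 = \<alpha> * (\<alpha> * (norm d)\<^sup>2)" by (simp add: power2_eq_square)
  also have "\<dots> \<le> \<alpha> * (\<mu> * (norm d)\<^sup>2)"
    using assms by (intro mult_left_mono mult_right_mono) auto
  also have "\<dots> \<le> \<alpha> * (g \<bullet> d)" using assms by (intro mult_left_mono)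
  finally have "\<alpha>\<^sup>2 * (norm d)\<^sup>2 \<le> \<alpha> * (g \<bullet> d)" .
  moreover have "(norm (g - \<alpha> *\<^sub>R d))\<^sup>2 = (norm g)\<^sup>2 - 2 * \<alpha> * (g \<bullet> d) + \<alpha>\<^sup>2 * (norm d)\<^sup>2"
    unfolding power2_norm_eq_inner
    by (simp add: inner_diff_left inner_diff_right inner_commute algebra_simps power2_eq_square)
  moreover have "0 \<le> \<alpha>\<^sup>2 * (norm d)\<^sup>2" by simp
  ultimately show ?thesis by linarith
qed

lemma norm_residual_le_of_step:
  fixes a w r e :: "'a::real_inner"
  assumes eta_pos: "0 < \<eta>" and step: "a = - \<eta> *\<^sub>R (w + r + c *\<^sub>R e)"
  shows "\<eta> / 4 * (norm r)\<^sup>2 \<le> 1 / (2 * \<eta>) * (norm a)\<^sup>2 + \<eta> * (norm w)\<^sup>2 + \<eta> * c\<^sup>2 * (norm e)\<^sup>2"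
proof -
  have "r = - ((1 / \<eta>) *\<^sub>R a + (w + c *\<^sub>R e))"
    using eta_pos by (simp add: step algebra_simps)
  then have "(norm r)\<^sup>2 \<le> 2 * (norm ((1 / \<eta>) *\<^sub>R a))\<^sup>2 + 2 * (norm (w + c *\<^sub>R e))\<^sup>2"
    by (simp only: norm_minus_cancel norm_add_square_le)
  also have "\<dots> \<le> 2 / \<eta>\<^sup>2 * (norm a)\<^sup>2 + 4 * (norm w)\<^sup>2 + 4 * c\<^sup>2 * (norm e)\<^sup>2"
    using norm_add_square_le[of w "c *\<^sub>R e"] eta_pos by (simp add: power_mult_distrib power_divide)
  finally show ?thesis
    using eta_pos by (simp add: field_simps power2_eq_square)
qed

lemma shifted_gradient_diff_norm_le_bregman:
  fixes F :: "real^'d \<Rightarrow> real"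
  assumes grad: "\<And>x. (F has_derivative (\<lambda>h. gF x \<bullet> h)) (at x)"
    and lipschitz: "\<And>x x'. norm (gF x - gF x') \<le> L * norm (x - x')"
    and strconv: "convex_on UNIV (\<lambda>x. F x - \<mu> / 2 * (norm x)\<^sup>2)"
    and "0 < \<mu>" "\<mu> \<le> L" "0 \<le> \<alpha>" "\<alpha> \<le> \<mu>"
  shows "(norm (gF x - gF y - \<alpha> *\<^sub>R (x - y)))\<^sup>2 \<le> 2 * L * bregman F gF x y"
proof -
  have tangent: "F u + gF u \<bullet> (v - u) \<le> F v" for u v
  proof -
    have "0 \<le> \<mu> / 2 * (norm (v - u))\<^sup>2" using \<open>0 < \<mu>\<close> by simp
    then show ?thesis using strongly_convex_gradient_lower_bound[OF grad strconv, of u v] by linarith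
  qed
  have "(norm (gF x - gF y - \<alpha> *\<^sub>R (x - y)))\<^sup>2 \<le> (norm (gF x - gF y))\<^sup>2"
    using \<open>0 \<le> \<alpha>\<close> \<open>\<alpha> \<le> \<mu>\<close> strongly_convex_gradient_monotone[OF grad strconv]
    by (rule norm_diff_scaleR_le_of_inner_ge)
  also have "\<dots> \<le> 2 * L * bregman F gF x y"
    using lipschitz_gradient_norm_le_bregman[OF grad lipschitz tangent] assms by simp
  finally show ?thesis .
qed

lemma algB_x_Suc:
  fixes gF K b \<eta> \<theta> \<alpha> \<tau> x0 k
  assumes "1 + \<eta> * \<alpha> \<noteq> 0"
  defines "xg \<equiv> algB_xg gF K b \<eta> \<theta> \<alpha> \<tau> x0 k"
  shows "(1 + \<eta> * \<alpha>) *\<^sub>R algB_x gF K b \<eta> \<theta> \<alpha> \<tau> x0 (Suc k)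
    = algB_x gF K b \<eta> \<theta> \<alpha> \<tau> x0 k
      - \<eta> *\<^sub>R (gF xg - \<alpha> *\<^sub>R xg + transpose K *v algB_y gF K b \<eta> \<theta> \<alpha> \<tau> x0 (Suc k))"
  using assms
  by (simp add: algB_x_def algB_y_def algB_xg_def algB_xf_def algB_state_def algB_step_def Let_def)

theorem lemma4:
  fixes F :: "real^'d \<Rightarrow> real" and gF :: "real^'d \<Rightarrow> real^'d"
    and K :: "real^'d^'p" and b :: "real^'p"
    and L \<mu> \<eta> \<theta> \<alpha> \<tau> :: real and x0 xs :: "real^'d" and ys :: "real^'p" and k :: nat
  assumes grad: "\<And>x. (F has_derivative (\<lambda>h. gF x \<bullet> h)) (at x)"
    and smooth: "\<And>x x'. norm (gF x - gF x') \<le> L * norm (x - x')"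
    and strconv: "convex_on UNIV (\<lambda>x. F x - \<mu> / 2 * (norm x)\<^sup>2)"
    and mu_pos: "0 < \<mu>" and mu_le_L: "\<mu> \<le> L"
    and K_nz: "K \<noteq> 0"
    and b_range: "b \<in> range (\<lambda>x. K *v x)"
    and xs_feas: "K *v xs = b"
    and xs_min: "\<And>x. K *v x = b \<Longrightarrow> F xs \<le> F x"
    and ys_range: "ys \<in> range (\<lambda>x. K *v x)"
    and ys_opt: "gF xs + transpose K *v ys = 0"
    and eta_pos: "0 < \<eta>" and theta_pos: "0 < \<theta>"
    and alpha_nn: "0 \<le> \<alpha>" and alpha_le: "\<alpha> \<le> \<mu>"
  shows "- (1 / (2 * \<eta>)) * (norm (algB_x gF K b \<eta> \<theta> \<alpha> \<tau> x0 (Suc k) - algB_x gF K b \<eta> \<theta> \<alpha> \<tau> x0 k))\<^sup>2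
         \<le> - (\<eta> / 4) * (norm (transpose K *v algB_y gF K b \<eta> \<theta> \<alpha> \<tau> x0 (Suc k) - transpose K *v ys))\<^sup>2
           + \<eta> * \<alpha>\<^sup>2 * (norm (algB_x gF K b \<eta> \<theta> \<alpha> \<tau> x0 (Suc k) - xs))\<^sup>2
           + 2 * \<eta> * L * bregman F gF (algB_xg gF K b \<eta> \<theta> \<alpha> \<tau> x0 k) xs"
proof -
  define x where "x = algB_x gF K b \<eta> \<theta> \<alpha> \<tau> x0 k"
  define x' where "x' = algB_x gF K b \<eta> \<theta> \<alpha> \<tau> x0 (Suc k)"
  define y' where "y' = algB_y gF K b \<eta> \<theta> \<alpha> \<tau> x0 (Suc k)"
  define xg where "xg = algB_xg gF K b \<eta> \<theta> \<alpha> \<tau> x0 k"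
  define w where "w = (gF xg - gF xs) - \<alpha> *\<^sub>R (xg - xs)"
  have gF_xs: "gF xs = - (transpose K *v ys)"
    using ys_opt by (simp add: eq_neg_iff_add_eq_0)
  have "0 < 1 + \<eta> * \<alpha>"
    using eta_pos alpha_nn by (simp add: add_pos_nonneg)
  then have "(1 + \<eta> * \<alpha>) *\<^sub>R x' = x - \<eta> *\<^sub>R (gF xg - \<alpha> *\<^sub>R xg + transpose K *v y')"
    unfolding x_def x'_def y'_def xg_def by (intro algB_x_Suc) simp
  then have "x' - x = - \<eta> *\<^sub>R (gF xg - \<alpha> *\<^sub>R xg + transpose K *v y' + \<alpha> *\<^sub>R x')"
    by (simp add: algebra_simps)
  also have "gF xg - \<alpha> *\<^sub>R xg + transpose K *v y' + \<alpha> *\<^sub>R x'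
      = w + (transpose K *v y' - transpose K *v ys) + \<alpha> *\<^sub>R (x' - xs)"
    unfolding w_def gF_xs by (simp add: algebra_simps)
  finally have "\<eta> / 4 * (norm (transpose K *v y' - transpose K *v ys))\<^sup>2
    \<le> 1 / (2 * \<eta>) * (norm (x' - x))\<^sup>2 + \<eta> * (norm w)\<^sup>2 + \<eta> * \<alpha>\<^sup>2 * (norm (x' - xs))\<^sup>2"
    by (rule norm_residual_le_of_step[OF eta_pos])
  moreover have "\<eta> * (norm w)\<^sup>2 \<le> \<eta> * (2 * L * bregman F gF xg xs)"
    unfolding w_def
    by (intro mult_left_mono less_imp_le[OF eta_pos]
        shifted_gradient_diff_norm_le_bregman[OF grad smooth strconv mu_pos mu_le_L alpha_nn alpha_le])
  ultimately show ?thesis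
    unfolding x_def[symmetric] x'_def[symmetric] y'_def[symmetric] xg_def[symmetric] by linarith
qed

end
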